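(* In System $\mathsf{F_{<:}^{K\top}}$, for any type $\Theta\vdash T$, the type $\Theta^*(T)$ is not a type variable, satisfies $\Theta\vdash T<:\Theta^*(T)$, and for every type $\Theta\vdash T'$ that is not a type variable, if $\Theta\vdash T<:T'$ then $\Theta\vdash\Theta^*(T)<:T'$.
   Context: System $\mathsf{F_{<:}^{K\top}}$: raw types $T ::= \top \mid X \mid T\to T \mid \forall^{\mathsf K}(X<:T).T \mid \forall^\top(X<:T).T$, up to $\alpha$-conversion. Contexts $\Theta$: finite sequences of $X<:T$ or $x:T$ with distinct variables, each type well-formed over the preceding part. Subtyping $\Theta\vdash S<:T$: (Var) $\Theta,X<:T,\Theta'\vdash X<:T$; (Top) $T<:\top$; (Refl); (Trans); ($\to$) from $S'<:S$, $T<:T'$ infer $S\to T<:S'\to T'$; ($\forall$-Fun) from $\Theta,X<:S\vdash T<:T'$ infer $\Theta\vdash\forall^{\mathsf K}(X<:S).T<:\forall^{\mathsf K}(X<:S).T'$; ($\forall$-Loc) from $\Theta\vdash T_0<:S_0$, $\Theta,X<:S_0\vdash S_1<:T_1$ infer $\Theta\vdash\forall^{\mathsf K}(X<:S_0).S_1<:\forall^\top(X<:T_0).T_1$; ($\forall$-Top) from $\Theta\vdash T_0<:S_0$, $\Theta,X<:\top\vdash S_1<:T_1$ infer $\Theta\vdash\forall^\top(X<:S_0).S_1<:\forall^\top(X<:T_0).T_1$. $\Theta^*(T)$ is defined by: $\Theta^*(T)=\Theta^*(S)$ if $T\equiv X$ and $\Theta\equiv\Theta',X<:S,\Theta''$;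 $\Theta^*(T)=T$ otherwise. *)

theory Defs
  imports Main
begin

text \<open>Types of System F-sub with kernel and top quantifiers, up to alpha-conversion,
  represented with de Bruijn indices. In AllK S T and AllT S T the body T binds index 0.\<close>

datatype type =
    Top
  | TVar nat
  | Fun type type
  | AllK type type
  | AllT type type

datatype binding = VarB type | TVarB type

type_synonym env = "binding list"

fun liftT :: "nat \<Rightarrow> nat \<Rightarrow> type \<Rightarrow> type" where
  "liftT n k Top = Top"
| "liftT n k (TVar i) = (if i < k then TVar i else TVar (i + n))"
| "liftT n k (Fun S T) = Fun (liftT n k S) (liftT n k T)"
| "liftT n k (AllK S T) = AllK (liftT n k S) (liftT n (Suc k) T)"
| "liftT n k (AllT S T) = AllT (liftT n k S) (liftT n (Suc k) T)"

fun mapB :: "(type \<Rightarrow> type) \<Rightarrow> binding \<Rightarrow> binding" where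
  "mapB f (VarB T) = VarB (f T)"
| "mapB f (TVarB T) = TVarB (f T)"

text \<open>Context lookup: the i-th binding (counting from the most recent), with its type
  shifted so that it is interpreted in the whole context.\<close>
definition lookup :: "env \<Rightarrow> nat \<Rightarrow> binding option" where
  "lookup \<Gamma> i = (if i < length \<Gamma> then Some (mapB (liftT (Suc i) 0) (\<Gamma> ! i)) else None)"

inductive wf_type :: "env \<Rightarrow> type \<Rightarrow> bool" where
  wf_TVar: "lookup \<Gamma> i = Some (TVarB U) \<Longrightarrow> wf_type \<Gamma> (TVar i)"
| wf_Top: "wf_type \<Gamma> Top"
| wf_Fun: "wf_type \<Gamma> S \<Longrightarrow> wf_type \<Gamma> T \<Longrightarrow> wf_type \<Gamma> (Fun S T)"
| wf_AllK: "wf_type \<Gamma> S \<Longrightarrow> wf_type (TVarB S # \<Gamma>) T \<Longrightarrow> wf_type \<Gamma> (AllK S T)"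
| wf_AllT: "wf_type \<Gamma> S \<Longrightarrow> wf_type (TVarB S # \<Gamma>) T \<Longrightarrow> wf_type \<Gamma> (AllT S T)"

inductive wf_env :: "env \<Rightarrow> bool" where
  wf_Nil: "wf_env []"
| wf_TVarB: "wf_env \<Gamma> \<Longrightarrow> wf_type \<Gamma> T \<Longrightarrow> wf_env (TVarB T # \<Gamma>)"
| wf_VarB: "wf_env \<Gamma> \<Longrightarrow> wf_type \<Gamma> T \<Longrightarrow> wf_env (VarB T # \<Gamma>)"

inductive subtype :: "env \<Rightarrow> type \<Rightarrow> type \<Rightarrow> bool" where
  SA_Var: "wf_env \<Gamma> \<Longrightarrow> lookup \<Gamma> i = Some (TVarB U) \<Longrightarrow> subtype \<Gamma> (TVar i) U"
| SA_Top: "wf_env \<Gamma> \<Longrightarrow> wf_type \<Gamma> T \<Longrightarrow> subtype \<Gamma> T Top"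
| SA_Refl: "wf_env \<Gamma> \<Longrightarrow> wf_type \<Gamma> T \<Longrightarrow> subtype \<Gamma> T T"
| SA_Trans: "subtype \<Gamma> S U \<Longrightarrow> subtype \<Gamma> U T \<Longrightarrow> subtype \<Gamma> S T"
| SA_Fun: "subtype \<Gamma> S' S \<Longrightarrow> subtype \<Gamma> T T' \<Longrightarrow> subtype \<Gamma> (Fun S T) (Fun S' T')"
| SA_AllFun: "subtype (TVarB S # \<Gamma>) T T' \<Longrightarrow> subtype \<Gamma> (AllK S T) (AllK S T')"
| SA_AllLoc: "subtype \<Gamma> T0 S0 \<Longrightarrow> subtype (TVarB S0 # \<Gamma>) S1 T1 \<Longrightarrow>
              subtype \<Gamma> (AllK S0 S1) (AllT T0 T1)"
| SA_AllTop: "subtype \<Gamma> T0 S0 \<Longrightarrow> subtype (TVarB Top # \<Gamma>) S1 T1 \<Longrightarrow>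
              subtype \<Gamma> (AllT S0 S1) (AllT T0 T1)"

fun is_TVar :: "type \<Rightarrow> bool" where
  "is_TVar (TVar i) = True"
| "is_TVar _ = False"

lemma liftT_TVar_ge: "liftT (Suc i) 0 S = TVar j \<Longrightarrow> Suc i \<le> j"
  by (cases S) (auto split: if_splits)

lemma lookup_TVarB_TVar:
  assumes "lookup \<Gamma> i = Some (TVarB (TVar j))"
  shows "i < j \<and> i < length \<Gamma>"
proof -
  have l: "i < length \<Gamma>" and e: "mapB (liftT (Suc i) 0) (\<Gamma> ! i) = TVarB (TVar j)"
    using assms by (simp_all add: lookup_def split: if_splits)
  obtain S where "liftT (Suc i) 0 S = TVar j"
    using e by (cases "\<Gamma> ! i") auto
  then show ?thesis using l liftT_TVar_ge by fastforce
qed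

fun tvar_bound :: "binding option \<Rightarrow> type option" where
  "tvar_bound (Some (TVarB S)) = Some S"
| "tvar_bound _ = None"

lemma promote_measure_lemma:
  "tvar_bound (lookup \<Gamma> i) = Some S \<Longrightarrow>
   (case S of TVar j \<Rightarrow> length \<Gamma> - j | _ \<Rightarrow> 0) < length \<Gamma> - i"
proof -
  assume a: "tvar_bound (lookup \<Gamma> i) = Some S"
  then have b: "lookup \<Gamma> i = Some (TVarB S)"
    by (cases "lookup \<Gamma> i" rule: tvar_bound.cases) auto
  then have "i < length \<Gamma>" by (simp add: lookup_def split: if_splits)
  with b show ?thesis
    using lookup_TVarB_TVar[of \<Gamma> i] by (cases S) auto
qed

text \<open>Theta-star: Theta*(X) = Theta*(S) if X<:S in Theta, and Theta*(T) = T otherwise.\<close>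
function promote :: "env \<Rightarrow> type \<Rightarrow> type" where
  "promote \<Gamma> (TVar i) =
     (case tvar_bound (lookup \<Gamma> i) of Some S \<Rightarrow> promote \<Gamma> S | None \<Rightarrow> TVar i)"
| "promote \<Gamma> Top = Top"
| "promote \<Gamma> (Fun S T) = Fun S T"
| "promote \<Gamma> (AllK S T) = AllK S T"
| "promote \<Gamma> (AllT S T) = AllT S T"
  by pat_completeness auto
termination
  by (relation "measure (\<lambda>(\<Gamma>, T). case T of TVar i \<Rightarrow> length \<Gamma> - i | _ \<Rightarrow> 0)")
     (simp_all add: promote_measure_lemma)

end

theory Submission
  imports Defs
begin

text \<open>Following upper bounds from a type variable terminates, since the bound of a
  variable only mentions variables declared before it, and ends at a non-variable; each step
  is an instance of rule Var, so \<open>T <: \<Theta>\<^sup>*(T)\<close>. For minimality, \<open>\<Theta>\<^sup>*\<close> is monotone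
  along subtyping derivations: rule Var collapses to reflexivity because
  \<open>\<Theta>\<^sup>*(X) = \<Theta>\<^sup>*(U)\<close> for \<open>X <: U\<close> in \<open>\<Theta>\<close>, rules Top, Refl and Trans are preserved
  directly, and the remaining rules relate non-variable types, which \<open>\<Theta>\<^sup>*\<close> fixes.\<close>

lemma wf_type_TVar_iff: "wf_type \<Gamma> (TVar i) \<longleftrightarrow> (\<exists>U. lookup \<Gamma> i = Some (TVarB U))"
  by (auto intro: wf_TVar elim: wf_type.cases)

lemma lookup_Cons_0: "lookup (B # \<Gamma>) 0 = Some (mapB (liftT (Suc 0) 0) B)"
  by (simp add: lookup_def)

lemma liftT_liftT: "liftT n k (liftT m k T) = liftT (n + m) k T"
  by (induction T arbitrary: k) auto

lemma lookup_Cons_Suc: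
  "lookup (B # \<Gamma>) (Suc i) = map_option (mapB (liftT (Suc 0) 0)) (lookup \<Gamma> i)"
  by (cases "\<Gamma> ! i") (simp_all add: lookup_def liftT_liftT)

lemma mapB_eq_TVarB_iff: "mapB f B = TVarB V \<longleftrightarrow> (\<exists>U. B = TVarB U \<and> V = f U)"
  by (cases B) auto

lemma lookup_Cons_Suc_TVarB_iff:
  "lookup (B # \<Gamma>) (Suc i) = Some (TVarB V) \<longleftrightarrow>
   (\<exists>U. lookup \<Gamma> i = Some (TVarB U) \<and> V = liftT (Suc 0) 0 U)"
  by (auto simp: lookup_Cons_Suc mapB_eq_TVarB_iff)

lemma wf_type_TVar_Cons_Suc_iff: "wf_type (B # \<Gamma>) (TVar (Suc i)) \<longleftrightarrow> wf_type \<Gamma> (TVar i)"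
  by (auto simp: wf_type_TVar_iff lookup_Cons_Suc_TVarB_iff)

lemma wf_type_TVar_TVarB_0: "wf_type (TVarB S # \<Gamma>) (TVar 0)"
  by (simp add: wf_type_TVar_iff lookup_Cons_0)

text \<open>As far as type variables go, \<open>\<Gamma>'\<close> is \<open>\<Gamma>\<close> with a binding inserted at depth \<open>k\<close>.\<close>

definition tvar_shift_into :: "env \<Rightarrow> nat \<Rightarrow> env \<Rightarrow> bool" where
  "tvar_shift_into \<Gamma> k \<Gamma>' \<longleftrightarrow>
     (\<forall>i. wf_type \<Gamma> (TVar i) \<longrightarrow> wf_type \<Gamma>' (TVar (if i < k then i else Suc i)))"

lemma tvar_shift_into_TVarB:
  assumes "tvar_shift_into \<Gamma> k \<Gamma>'"
  shows "tvar_shift_into (TVarB S # \<Gamma>) (Suc k) (TVarB S' # \<Gamma>')"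
  unfolding tvar_shift_into_def
proof (intro allI impI)
  fix i assume "wf_type (TVarB S # \<Gamma>) (TVar i)"
  then show "wf_type (TVarB S' # \<Gamma>') (TVar (if i < Suc k then i else Suc i))"
    using assms by (cases i)
      (auto simp: tvar_shift_into_def wf_type_TVar_Cons_Suc_iff wf_type_TVar_TVarB_0)
qed

lemma wf_type_liftT:
  "wf_type \<Gamma> T \<Longrightarrow> tvar_shift_into \<Gamma> k \<Gamma>' \<Longrightarrow> wf_type \<Gamma>' (liftT (Suc 0) k T)"
proof (induction arbitrary: \<Gamma>' k rule: wf_type.induct)
  case (wf_TVar \<Gamma> i U)
  then show ?case
    by (auto simp: tvar_shift_into_def intro: wf_type.wf_TVar)
next
  case (wf_AllK \<Gamma> S T)
  then show ?case by (simp add: wf_type.wf_AllK tvar_shift_into_TVarB)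
next
  case (wf_AllT \<Gamma> S T)
  then show ?case by (simp add: wf_type.wf_AllT tvar_shift_into_TVarB)
qed (simp_all add: wf_type.wf_Top wf_type.wf_Fun)

lemma wf_type_weaken: "wf_type \<Gamma> T \<Longrightarrow> wf_type (B # \<Gamma>) (liftT (Suc 0) 0 T)"
  by (erule wf_type_liftT) (simp add: tvar_shift_into_def wf_type_TVar_Cons_Suc_iff)

lemma wf_type_lookup_TVarB:
  "wf_env \<Gamma> \<Longrightarrow> lookup \<Gamma> i = Some (TVarB U) \<Longrightarrow> wf_type \<Gamma> U"
proof (induction arbitrary: i U rule: wf_env.induct)
  case wf_Nil
  then show ?case by (simp add: lookup_def)
next
  case (wf_TVarB \<Gamma> T)
  then show ?case
    by (cases i) (auto simp: lookup_Cons_0 lookup_Cons_Suc_TVarB_iff intro: wf_type_weaken)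
next
  case (wf_VarB \<Gamma> T)
  then show ?case
    by (cases i) (auto simp: lookup_Cons_0 lookup_Cons_Suc_TVarB_iff intro: wf_type_weaken)
qed

lemma promote_TVar_lookup:
  "lookup \<Gamma> i = Some (TVarB U) \<Longrightarrow> promote \<Gamma> (TVar i) = promote \<Gamma> U"
  by simp

lemma promote_non_TVar: "\<not> is_TVar T \<Longrightarrow> promote \<Gamma> T = T"
  by (cases T) auto

lemma promote_wf_upper_bound:
  "wf_env \<Gamma> \<Longrightarrow> wf_type \<Gamma> T \<Longrightarrow>
   \<not> is_TVar (promote \<Gamma> T) \<and> wf_type \<Gamma> (promote \<Gamma> T) \<and> subtype \<Gamma> T (promote \<Gamma> T)"
proof (induction \<Gamma> T rule: promote.induct)
  case (1 \<Gamma> i)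
  then obtain U where U: "lookup \<Gamma> i = Some (TVarB U)"
    by (auto simp: wf_type_TVar_iff)
  with "1.prems" have "wf_type \<Gamma> U"
    by (blast intro: wf_type_lookup_TVarB)
  with "1.IH" U "1.prems" have IH:
    "\<not> is_TVar (promote \<Gamma> U) \<and> wf_type \<Gamma> (promote \<Gamma> U) \<and> subtype \<Gamma> U (promote \<Gamma> U)"
    by simp
  moreover have "subtype \<Gamma> (TVar i) U"
    using "1.prems"(1) U by (rule SA_Var)
  ultimately show ?case
    unfolding promote_TVar_lookup[OF U] by (blast intro: SA_Trans)
qed (auto intro: SA_Refl)

lemma subtype_promote_mono:
  "subtype \<Gamma> S T \<Longrightarrow> subtype \<Gamma> (promote \<Gamma> S) (promote \<Gamma> T)"
proof (induction rule: subtype.induct)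
  case (SA_Var \<Gamma> i U)
  then have "wf_type \<Gamma> (promote \<Gamma> U)"
    using wf_type_lookup_TVarB promote_wf_upper_bound by blast
  with SA_Var show ?case
    by (simp add: promote_TVar_lookup SA_Refl)
next
  case (SA_Top \<Gamma> T)
  then show ?case using promote_wf_upper_bound by (simp add: subtype.SA_Top)
next
  case (SA_Refl \<Gamma> T)
  then show ?case using promote_wf_upper_bound by (blast intro: subtype.SA_Refl)
next
  case (SA_Trans \<Gamma> S U T)
  then show ?case by (blast intro: subtype.SA_Trans)
qed (auto intro: subtype.intros)

theorem lemma6p3:
  assumes "wf_env \<Theta>" and "wf_type \<Theta> T"
  shows "\<not> is_TVar (promote \<Theta> T)
         \<and> subtype \<Theta> T (promote \<Theta> T)
         \<and> (\<forall>T'. wf_type \<Theta> T' \<longrightarrow> \<not> is_TVar T' \<longrightarrow> subtype \<Theta> T T'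
                  \<longrightarrow> subtype \<Theta> (promote \<Theta> T) T')"
proof (intro conjI allI impI)
  show "\<not> is_TVar (promote \<Theta> T)" and "subtype \<Theta> T (promote \<Theta> T)"
    using promote_wf_upper_bound[OF assms] by simp_all
next
  fix T' assume "\<not> is_TVar T'" and "subtype \<Theta> T T'"
  then show "subtype \<Theta> (promote \<Theta> T) T'"
    using subtype_promote_mono promote_non_TVar by metis
qed

end
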